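(* Under the standing setting and assumptions (A1)–(A3) described in the context, assume $\mathcal A$ is polyhedral and represented by $\varphi_1,\dots,\varphi_m\in\mathcal X'_+$, and for $X\in\mathcal X$ set $I_{\mathcal A}(X)=\{i\in\{1,\dots,m\}: \varphi_i(X)=\sigma_{\mathcal A}(\varphi_i)\}$. Then the following are equivalent: (a) $|\mathcal R(X)|=1$ for every $X\in\mathcal X$; (b) $\ker(\pi)\cap\bigcap_{i\in I_{\mathcal A}(X)}\ker(\varphi_i)=\{0\}$ for every $X\in\partial\mathcal A\cap\partial(\mathcal A+\ker(\pi))$.
   Context: Let $\mathcal X$ be a Hausdorff, first countable, locally convex topological vector space over $\mathbb R$ with dual $\mathcal X'$, partially ordered by a partial order $\geq$ with positive cone $\mathcal X_+=\{X\in\mathcal X: X\geq 0\}$, and $\mathcal X'_+=\{\varphi\in\mathcal X':\varphi(X)\geq0\ \forall X\in\mathcal X_+\}$. Let $\mathcal M\subset\mathcal X$ be a vector subspace with $1<\dim\mathcal M<\infty$, carrying the relative topology, and let $\pi:\mathcal M\to\mathbb R$ be linear with $\ker(\pi)=\{Z\in\mathcal M:\pi(Z)=0\}$. Standing assumptions: (A1) there is $U\in\mathcal M\cap\mathcal X_+$ with $\pi(U)=1$; (A2) $\mathcal A\subsetneq\mathcal X$ is closed, contains $0$, and satisfies $\mathcal A+\mathcal X_+\subset\mathcal A$; (A3) the map $\rho(X)=\inf\{\pi(Z): Z\in\mathcal M,\ X+Z\in\mathcal A\}$ is finitely valued and continuous on $\mathcal X$. The optimal payoff map is $\mathcal R(X)=\{Z\in\mathcal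 M: X+Z\in\mathcal A,\ \pi(Z)=\rho(X)\}$; $|\cdot|$ is cardinality. The support function is $\sigma_{\mathcal A}(\varphi)=\inf_{X\in\mathcal A}\varphi(X)$. $\mathcal A$ is polyhedral and represented by $\varphi_1,\dots,\varphi_m$ if $\mathcal A=\bigcap_{i=1}^m\{X\in\mathcal X:\varphi_i(X)\geq\alpha_i\}$ for some $\alpha_i\in\mathbb R$ (equivalently, $\mathcal A=\bigcap_{i=1}^m\{X:\varphi_i(X)\geq\sigma_{\mathcal A}(\varphi_i)\}$). $\ker(\varphi_i)$ is the kernel of $\varphi_i$. $\partial$ denotes boundary in $\mathcal X$. *)

theory Defs
  imports "HOL-Analysis.Analysis"
begin

definition lctvs :: "'a::{real_vector,topological_space} itself \<Rightarrow> bool" where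
  "lctvs _ \<longleftrightarrow>
     continuous_on UNIV (\<lambda>p::'a \<times> 'a. fst p + snd p) \<and>
     continuous_on UNIV (\<lambda>p::real \<times> 'a. fst p *\<^sub>R snd p) \<and>
     (\<forall>U::'a set. open U \<and> 0 \<in> U \<longrightarrow> (\<exists>V. open V \<and> convex V \<and> 0 \<in> V \<and> V \<subseteq> U))"

definition tdual :: "('a::{real_vector,topological_space} \<Rightarrow> real) set" where
  "tdual = {\<phi>. linear \<phi> \<and> continuous_on UNIV \<phi>}"

text \<open>Positive cone of a partial order given as a relation (ge X Y means X \<ge> Y).\<close>
definition pos_cone :: "('a::real_vector \<Rightarrow> 'a \<Rightarrow> bool) \<Rightarrow> 'a set" where
  "pos_cone ge = {X. ge X 0}"

definition pos_dual :: "('a::{real_vector,topological_space} \<Rightarrow> 'a \<Rightarrow> bool) \<Rightarrow> ('a \<Rightarrow> real) set" where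
  "pos_dual ge = {\<phi> \<in> tdual. \<forall>X \<in> pos_cone ge. \<phi> X \<ge> 0}"

definition kerM :: "'a set \<Rightarrow> ('a \<Rightarrow> real) \<Rightarrow> 'a set" where
  "kerM M \<pi> = {Z \<in> M. \<pi> Z = 0}"

definition rho :: "'a::real_vector set \<Rightarrow> 'a set \<Rightarrow> ('a \<Rightarrow> real) \<Rightarrow> 'a \<Rightarrow> real" where
  "rho A M \<pi> X = Inf {\<pi> Z | Z. Z \<in> M \<and> X + Z \<in> A}"

definition optR :: "'a::real_vector set \<Rightarrow> 'a set \<Rightarrow> ('a \<Rightarrow> real) \<Rightarrow> 'a \<Rightarrow> 'a set" where
  "optR A M \<pi> X = {Z \<in> M. X + Z \<in> A \<and> \<pi> Z = rho A M \<pi> X}"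

definition supp_fun :: "'a set \<Rightarrow> ('a \<Rightarrow> real) \<Rightarrow> real" where
  "supp_fun A \<phi> = Inf (\<phi> ` A)"

definition active_set :: "'a set \<Rightarrow> nat \<Rightarrow> (nat \<Rightarrow> 'a \<Rightarrow> real) \<Rightarrow> 'a \<Rightarrow> nat set" where
  "active_set A m \<phi> X = {i \<in> {1..m}. \<phi> i X = supp_fun A (\<phi> i)}"

end

theory Submission
  imports Defs
begin

text \<open>The boundary \<open>\<partial>A \<inter> \<partial>(A + ker \<pi>)\<close> is exactly \<open>{X \<in> A. \<rho> X = 0}\<close>, because the
  interior of \<open>A + ker \<pi>\<close> is \<open>{\<rho> < 0}\<close>. If \<open>Z \<noteq> Z'\<close> are both optimal for \<open>X\<close>, the
  midpoint \<open>Y = X + (Z + Z')/2\<close> lies in \<open>A\<close> with \<open>\<rho> Y = 0\<close>, and every constraint active at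
  \<open>Y\<close> is active at \<open>X + Z\<close> and \<open>X + Z'\<close>; so \<open>Z - Z'\<close> is a nonzero element of \<open>ker \<pi>\<close>
  killed by all active \<open>\<phi>\<^sub>i\<close>. Conversely, such a \<open>W\<close> at a boundary point \<open>X\<close> can be added
  in a small positive multiple without leaving \<open>A\<close>, so \<open>0\<close> and \<open>\<delta>W\<close> are both optimal.
  Existence of an optimal payoff is the fact that a linear program on a finite-dimensional
  space which is bounded below attains its minimum: descend along a direction of decrease
  until a constraint becomes tight, and minimise on that face by induction on the dimension.\<close>

definition polyhedron_on :: "'a set \<Rightarrow> 'i set \<Rightarrow> ('i \<Rightarrow> 'a \<Rightarrow> real) \<Rightarrow> ('i \<Rightarrow> real) \<Rightarrow> 'a set"
  where "polyhedron_on V J g c = {u \<in> V. \<forall>j\<in>J. c j \<le> g j u}"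

definition lp_solvable :: "'a set \<Rightarrow> 'i set \<Rightarrow> ('i \<Rightarrow> 'a \<Rightarrow> real) \<Rightarrow> ('a \<Rightarrow> real) \<Rightarrow> bool"
  where "lp_solvable V J g f \<longleftrightarrow>
    (\<forall>c. polyhedron_on V J g c \<noteq> {} \<longrightarrow> bdd_below (f ` polyhedron_on V J g c) \<longrightarrow>
       (\<exists>u\<in>polyhedron_on V J g c. \<forall>v\<in>polyhedron_on V J g c. f u \<le> f v))"

lemma lp_solvableE:
  assumes "lp_solvable V J g f" "polyhedron_on V J g c \<noteq> {}" "bdd_below (f ` polyhedron_on V J g c)"
  obtains u where "u \<in> polyhedron_on V J g c" "\<And>v. v \<in> polyhedron_on V J g c \<Longrightarrow> f u \<le> f v"
  using assms unfolding lp_solvable_def by blast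

lemma finite_argminE:
  fixes h :: "'i \<Rightarrow> real"
  assumes "finite K" "K \<noteq> {}"
  obtains j where "j \<in> K" "\<And>i. i \<in> K \<Longrightarrow> h j \<le> h i"
  using ex_is_arg_min_if_finite[OF assms, of h] by (auto simp: is_arg_min_linorder)

lemma polyhedron_on_ratio_test:
  fixes g :: "'i \<Rightarrow> 'a::real_vector \<Rightarrow> real"
  assumes V: "subspace V" and J: "finite J" "\<And>j. j \<in> J \<Longrightarrow> linear (g j)"
    and z: "z \<in> polyhedron_on V J g c" and d: "d \<in> V" "\<exists>j\<in>J. g j d < 0"
  obtains j t where "j \<in> J" "g j d < 0" "0 \<le> t"
    "z + t *\<^sub>R d \<in> polyhedron_on V J g c" "g j (z + t *\<^sub>R d) = c j"
proof -
  define Jn where "Jn = {j \<in> J. g j d < 0}"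
  define r where "r j = (g j z - c j) / (- g j d)" for j
  have g_line: "g j (z + t *\<^sub>R d) = g j z + t * g j d" if "j \<in> J" for j t
    using J(2)[OF that] by (simp add: linear_add linear_scale)
  obtain j where j: "j \<in> Jn" and j_min: "\<And>i. i \<in> Jn \<Longrightarrow> r j \<le> r i"
    using finite_argminE[of Jn r] J(1) d(2) by (auto simp: Jn_def)
  have jJ: "j \<in> J" and gjd: "g j d < 0" using j by (auto simp: Jn_def)
  have zc: "\<And>i. i \<in> J \<Longrightarrow> c i \<le> g i z" and zV: "z \<in> V" using z by (auto simp: polyhedron_on_def)
  have r0: "0 \<le> r j" using zc[OF jJ] gjd by (simp add: r_def divide_nonneg_neg)
  have "c i \<le> g i (z + r j *\<^sub>R d)" if i: "i \<in> J" for i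
  proof (cases "g i d < 0")
    case True
    then have "r j * (- g i d) \<le> r i * (- g i d)"
      using j_min[of i] i by (simp add: Jn_def mult_right_mono)
    moreover have "r i * (- g i d) = g i z - c i" using True by (simp add: r_def)
    ultimately show ?thesis using g_line[OF i] by simp
  next
    case False
    then show ?thesis using g_line[OF i] zc[OF i] r0 by (simp add: add_increasing2)
  qed
  then have "z + r j *\<^sub>R d \<in> polyhedron_on V J g c"
    using zV d(1) V by (simp add: polyhedron_on_def subspace_add subspace_scale)
  moreover have "g j (z + r j *\<^sub>R d) = c j"
    using g_line[OF jJ, of "r j"] gjd by (simp add: r_def field_simps)
  ultimately show ?thesis using that jJ gjd r0 by blast
qed

lemma polyhedron_on_descent:
  fixes g :: "'i \<Rightarrow> 'a::real_vector \<Rightarrow> real" and f :: "'a \<Rightarrow> real"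
  assumes V: "subspace V" and J: "finite J" "\<And>j. j \<in> J \<Longrightarrow> linear (g j)"
    and f_add: "\<And>x y. x \<in> V \<Longrightarrow> y \<in> V \<Longrightarrow> f (x + y) = f x + f y"
    and f_scale: "\<And>t x. x \<in> V \<Longrightarrow> f (t *\<^sub>R x) = t * f x"
    and d: "d \<in> V" "f d < 0"
    and bdd: "\<And>u. u \<in> polyhedron_on V J g c \<Longrightarrow> L \<le> f u"
    and z: "z \<in> polyhedron_on V J g c"
  obtains j q where "j \<in> J" "g j d < 0" "q \<in> polyhedron_on V J g c" "g j q = c j" "f q \<le> f z"
proof -
  have zV: "z \<in> V" using z by (simp add: polyhedron_on_def)
  have f_line: "f (z + t *\<^sub>R d) = f z + t * f d" for t
    using zV d(1) V by (simp add: f_add f_scale subspace_scale)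
  have "\<exists>j\<in>J. g j d < 0"
  proof (rule ccontr)
    assume no_neg: "\<not> ?thesis"
    define t where "t = (f z - L + 1) / (- f d)"
    have t0: "0 \<le> t" using bdd[OF z] d(2) by (simp add: t_def divide_nonneg_neg)
    have "c j \<le> g j (z + t *\<^sub>R d)" if "j \<in> J" for j
      using no_neg z t0 that J(2)[OF that]
      by (auto simp: polyhedron_on_def linear_add linear_scale add_increasing2)
    then have "z + t *\<^sub>R d \<in> polyhedron_on V J g c"
      using zV d(1) V by (simp add: polyhedron_on_def subspace_add subspace_scale)
    moreover have "t * f d = - (f z - L + 1)" using d(2) by (simp add: t_def)
    then have "f (z + t *\<^sub>R d) = L - 1" using f_line[of t] by linarith
    ultimately show False using bdd by fastforce
  qed
  then obtain j t where "j \<in> J" "g j d < 0" "0 \<le> t"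
      "z + t *\<^sub>R d \<in> polyhedron_on V J g c" "g j (z + t *\<^sub>R d) = c j"
    using polyhedron_on_ratio_test[OF V J z d(1)] by blast
  moreover have "f (z + t *\<^sub>R d) \<le> f z"
    using f_line \<open>0 \<le> t\<close> d(2) by (simp add: mult_nonneg_nonpos)
  ultimately show ?thesis using that by blast
qed

lemma polyhedron_on_face_min:
  fixes g :: "'i \<Rightarrow> 'a::real_vector \<Rightarrow> real" and f :: "'a \<Rightarrow> real"
  assumes V: "subspace V" and g_lin: "\<And>i. i \<in> J \<Longrightarrow> linear (g i)" and j: "j \<in> J"
    and f_add: "\<And>x y. x \<in> V \<Longrightarrow> y \<in> V \<Longrightarrow> f (x + y) = f x + f y"
    and bdd: "\<And>u. u \<in> polyhedron_on V J g c \<Longrightarrow> L \<le> f u"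
    and q0: "q0 \<in> polyhedron_on V J g c" "g j q0 = c j"
    and solvable: "lp_solvable (V \<inter> {x. g j x = 0}) J g f"
  obtains q where "q \<in> polyhedron_on V J g c" "g j q = c j"
    "\<And>q'. q' \<in> polyhedron_on V J g c \<Longrightarrow> g j q' = c j \<Longrightarrow> f q \<le> f q'"
proof -
  define W where "W = V \<inter> {x. g j x = 0}"
  define P where "P = polyhedron_on W J g (\<lambda>i. c i - g i q0)"
  have q0V: "q0 \<in> V" using q0 by (simp add: polyhedron_on_def)
  have shift: "u \<in> P \<longleftrightarrow> q0 + u \<in> polyhedron_on V J g c \<and> g j (q0 + u) = c j" for u
  proof -
    have "u \<in> V \<longleftrightarrow> q0 + u \<in> V"
      using q0V V by (metis add_diff_cancel_left' subspace_add subspace_diff)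
    moreover have "g i (q0 + u) = g i q0 + g i u" if "i \<in> J" for i
      using g_lin[OF that] by (rule linear_add)
    ultimately show ?thesis using q0(2) j
      by (auto simp: P_def W_def polyhedron_on_def diff_le_eq add.commute)
  qed
  have "0 \<in> P" using shift q0 by simp
  moreover have "bdd_below (f ` P)"
  proof (rule bdd_belowI2)
    fix u assume "u \<in> P"
    then have "q0 + u \<in> polyhedron_on V J g c" "u \<in> V"
      using shift by (auto simp: P_def W_def polyhedron_on_def)
    then show "L - f q0 \<le> f u" using bdd f_add[OF q0V] by fastforce
  qed
  ultimately obtain u where u: "u \<in> P" and u_min: "\<And>v. v \<in> P \<Longrightarrow> f u \<le> f v"
    using lp_solvableE[OF solvable[folded W_def], of "\<lambda>i. c i - g i q0"] unfolding P_def by blast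
  show ?thesis
  proof (rule that[of "q0 + u"])
    show "q0 + u \<in> polyhedron_on V J g c" "g j (q0 + u) = c j" using shift u by auto
  next
    fix q' assume "q' \<in> polyhedron_on V J g c" "g j q' = c j"
    then have "q' - q0 \<in> P" "q' - q0 \<in> V"
      using shift[of "q' - q0"] V q0V by (auto simp: polyhedron_on_def subspace_diff)
    moreover have "u \<in> V" using u by (simp add: P_def W_def polyhedron_on_def)
    ultimately have "f (q0 + u) = f q0 + f u" "f (q0 + (q' - q0)) = f q0 + f (q' - q0)"
      using f_add[OF q0V] by blast+
    then show "f (q0 + u) \<le> f q'" using u_min[OF \<open>q' - q0 \<in> P\<close>] by simp
  qed
qed

lemma polyhedron_on_min_from_faces:
  fixes g :: "'i \<Rightarrow> 'a::real_vector \<Rightarrow> real" and f :: "'a \<Rightarrow> real"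
  assumes V: "subspace V" and J: "finite J" "\<And>j. j \<in> J \<Longrightarrow> linear (g j)"
    and f_add: "\<And>x y. x \<in> V \<Longrightarrow> y \<in> V \<Longrightarrow> f (x + y) = f x + f y"
    and f_scale: "\<And>t x. x \<in> V \<Longrightarrow> f (t *\<^sub>R x) = t * f x"
    and d: "d \<in> V" "f d < 0"
    and bdd: "\<And>u. u \<in> polyhedron_on V J g c \<Longrightarrow> L \<le> f u"
    and u0: "u0 \<in> polyhedron_on V J g c"
    and faces: "\<And>j q0. j \<in> J \<Longrightarrow> g j d < 0 \<Longrightarrow> q0 \<in> polyhedron_on V J g c \<Longrightarrow> g j q0 = c j
      \<Longrightarrow> \<exists>q\<in>polyhedron_on V J g c. g j q = c j \<and>
            (\<forall>q'\<in>polyhedron_on V J g c. g j q' = c j \<longrightarrow> f q \<le> f q')"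
  shows "\<exists>u\<in>polyhedron_on V J g c. \<forall>v\<in>polyhedron_on V J g c. f u \<le> f v"
proof -
  let ?P = "polyhedron_on V J g c"
  define K where "K = {j \<in> J. g j d < 0 \<and> (\<exists>q\<in>?P. g j q = c j)}"
  have "\<forall>j\<in>K. \<exists>q\<in>?P. g j q = c j \<and> (\<forall>q'\<in>?P. g j q' = c j \<longrightarrow> f q \<le> f q')"
    using faces unfolding K_def by blast
  then obtain qf where qf: "\<And>j. j \<in> K \<Longrightarrow> qf j \<in> ?P \<and> g j (qf j) = c j \<and>
      (\<forall>q'\<in>?P. g j q' = c j \<longrightarrow> f (qf j) \<le> f q')"
    using bchoice[of K] by (metis (mono_tags, lifting))
  have descent: "\<exists>i\<in>K. \<exists>q\<in>?P. g i q = c i \<and> f q \<le> f v" if v: "v \<in> ?P" for v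
  proof -
    obtain i q where "i \<in> J" "g i d < 0" "q \<in> ?P" "g i q = c i" "f q \<le> f v"
      using polyhedron_on_descent[OF V J f_add f_scale d bdd v] .
    then show ?thesis unfolding K_def by blast
  qed
  obtain j where j: "j \<in> K" and j_min: "\<And>i. i \<in> K \<Longrightarrow> f (qf j) \<le> f (qf i)"
    using finite_argminE[of K "\<lambda>i. f (qf i)"] J(1) descent[OF u0] by (auto simp: K_def)
  have "f (qf j) \<le> f v" if v: "v \<in> ?P" for v
  proof -
    obtain i q where "i \<in> K" "q \<in> ?P" "g i q = c i" "f q \<le> f v" using descent[OF v] by blast
    then show ?thesis using qf[of i] j_min[of i] by fastforce
  qed
  then show ?thesis using qf[OF j] by blast
qed

lemma span_inter_kernel:
  fixes g :: "'a::real_vector \<Rightarrow> real"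
  assumes g: "linear g" and b0: "b0 \<in> B" "g b0 \<noteq> 0"
  shows "span B \<inter> {x. g x = 0} = span ((\<lambda>b. b - (g b / g b0) *\<^sub>R b0) ` (B - {b0}))"
proof -
  define p where "p x = x - (g x / g b0) *\<^sub>R b0" for x
  have p: "linear p"
    using g by (auto intro!: linearI simp: p_def linear_add linear_scale add_divide_distrib
        scaleR_add_left algebra_simps)
  have "p ` B \<subseteq> insert 0 (p ` (B - {b0}))" using b0 by (auto simp: p_def)
  then have "p ` span B \<subseteq> span (p ` (B - {b0}))"
    by (metis span_insert_0 span_mono span_linear_image[OF p])
  moreover have "x = p x" if "g x = 0" for x using that by (simp add: p_def)
  ultimately have sub: "span B \<inter> {x. g x = 0} \<subseteq> span (p ` (B - {b0}))" by blast
  have "p ` (B - {b0}) \<subseteq> span B \<inter> {x. g x = 0}"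
    using b0 g by (auto simp: p_def span_base span_diff span_scale linear_diff linear_scale)
  then have "span (p ` (B - {b0})) \<subseteq> span B \<inter> {x. g x = 0}"
    by (intro span_minimal subspace_inter subspace_span linear_subspace_kernel g)
  with sub show ?thesis unfolding p_def by blast
qed

text \<open>Each face lies in the kernel of a constraint, which is spanned by fewer vectors.\<close>

lemma lp_solvable_span:
  fixes g :: "'i \<Rightarrow> 'a::real_vector \<Rightarrow> real" and f :: "'a \<Rightarrow> real"
  assumes "finite B" and J: "finite J" "\<And>j. j \<in> J \<Longrightarrow> linear (g j)"
    and "\<And>x y. x \<in> span B \<Longrightarrow> y \<in> span B \<Longrightarrow> f (x + y) = f x + f y"
    and "\<And>t x. x \<in> span B \<Longrightarrow> f (t *\<^sub>R x) = t * f x"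
  shows "lp_solvable (span B) J g f"
  using assms(1,4,5)
proof (induction "card B" arbitrary: B rule: less_induct)
  case less
  note f_add = less.prems(2) and f_scale = less.prems(3)
  show ?case unfolding lp_solvable_def
  proof (intro allI impI)
    fix c
    let ?P = "polyhedron_on (span B) J g c"
    assume "?P \<noteq> {}" "bdd_below (f ` ?P)"
    then obtain u0 L where u0: "u0 \<in> ?P" and bdd: "\<And>u. u \<in> ?P \<Longrightarrow> L \<le> f u"
      by (auto simp: bdd_below_def)
    show "\<exists>u\<in>?P. \<forall>v\<in>?P. f u \<le> f v"
    proof (cases "\<forall>x\<in>span B. f x = 0")
      case True
      then show ?thesis using u0 by (auto simp: polyhedron_on_def)
    next
      case False
      then obtain x where x: "x \<in> span B" "f x \<noteq> 0" by blast
      define d where "d = (- f x) *\<^sub>R x"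
      have "f d = - (f x * f x)" using f_scale[OF x(1), of "- f x"] by (simp add: d_def)
      then have d: "d \<in> span B" "f d < 0"
        using x by (auto simp: d_def span_neg span_scale not_square_less_zero
            zero_less_mult_iff)
      have "\<exists>q\<in>?P. g j q = c j \<and> (\<forall>q'\<in>?P. g j q' = c j \<longrightarrow> f q \<le> f q')"
        if j: "j \<in> J" "g j d < 0" and q0: "q0 \<in> ?P" "g j q0 = c j" for j q0
      proof -
        obtain b0 where b0: "b0 \<in> B" "g j b0 \<noteq> 0"
          using linear_eq_0_on_span[OF J(2)[OF j(1)] _ d(1)] j(2) by force
        define B' where "B' = (\<lambda>b. b - (g j b / g j b0) *\<^sub>R b0) ` (B - {b0})"
        have face_space: "span B \<inter> {x. g j x = 0} = span B'"
          unfolding B'_def by (rule span_inter_kernel[OF J(2)[OF j(1)] b0])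
        have "card B' < card B"
          using less.prems(1) b0 unfolding B'_def
          by (meson card_Diff1_less card_image_le finite_Diff le_less_trans)
        moreover have "span B' \<subseteq> span B" using face_space by blast
        ultimately have "lp_solvable (span B \<inter> {x. g j x = 0}) J g f"
          unfolding face_space using less.prems(1) f_add f_scale
          by (intro less.hyps) (auto simp: B'_def subset_iff)
        then show ?thesis
          using polyhedron_on_face_min[OF subspace_span J(2) j(1) f_add bdd q0] by metis
      qed
      then show ?thesis
        using polyhedron_on_min_from_faces[OF subspace_span J f_add f_scale d bdd u0] by blast
    qed
  qed
qed

lemma small_step_keeps_inequalities:
  fixes a b c :: "'i \<Rightarrow> real"
  assumes "finite I" and ab: "\<And>i. i \<in> I \<Longrightarrow> a i \<le> b i"
    and tight: "\<And>i. i \<in> I \<Longrightarrow> a i = b i \<Longrightarrow> c i = 0"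
  obtains \<delta> where "0 < \<delta>" "\<And>i. i \<in> I \<Longrightarrow> a i \<le> b i + \<delta> * c i"
proof -
  have "\<forall>\<^sub>F t in at_right 0. a i \<le> b i + t * c i" if i: "i \<in> I" for i
  proof (cases "a i = b i")
    case True
    then show ?thesis using tight[OF i] by simp
  next
    case False
    then have "a i < b i + 0 * c i" using ab[OF i] by simp
    moreover have "((\<lambda>t. b i + t * c i) \<longlongrightarrow> b i + 0 * c i) (at_right 0)"
      by (intro tendsto_intros)
    ultimately have "\<forall>\<^sub>F t in at_right 0. a i < b i + t * c i" by (rule order_tendstoD(1)[rotated])
    then show ?thesis by (rule eventually_mono) simp
  qed
  then have "\<forall>\<^sub>F t in at_right 0. 0 < t \<and> (\<forall>i\<in>I. a i \<le> b i + t * c i)"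
    using \<open>finite I\<close> eventually_at_right_less
    by (intro eventually_conj eventually_ball_finite) auto
  then show ?thesis using that eventually_happens'[OF trivial_limit_at_right_real] by blast
qed

lemma lctvs_continuous_on_line:
  fixes X V :: "'a::{real_vector,topological_space}"
  assumes "lctvs TYPE('a)"
  shows "continuous_on UNIV (\<lambda>t::real. X + t *\<^sub>R V)"
proof -
  have add: "continuous_on UNIV (\<lambda>p::'a \<times> 'a. fst p + snd p)"
    and scale: "continuous_on UNIV (\<lambda>p::real \<times> 'a. fst p *\<^sub>R snd p)"
    using assms by (auto simp: lctvs_def)
  have "continuous_on UNIV (\<lambda>t::real. t *\<^sub>R V)"
    using continuous_on_compose2[OF scale, of UNIV "\<lambda>t. (t, V)"] by (simp add: continuous_intros)
  then show ?thesis
    using continuous_on_compose2[OF add, of UNIV "\<lambda>t. (X, t *\<^sub>R V)"] by (simp add: continuous_intros)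
qed

locale polyhedral_acceptance =
  fixes M A :: "'a::{real_vector,topological_space} set"
    and \<pi> :: "'a \<Rightarrow> real" and m :: nat and \<phi> :: "nat \<Rightarrow> 'a \<Rightarrow> real" and \<alpha> :: "nat \<Rightarrow> real"
    and U :: 'a
  assumes M_subspace: "subspace M"
    and M_finite_span: "\<exists>B. finite B \<and> span B = M"
    and \<pi>_add: "\<And>Y Z. Y \<in> M \<Longrightarrow> Z \<in> M \<Longrightarrow> \<pi> (Y + Z) = \<pi> Y + \<pi> Z"
    and \<pi>_scale: "\<And>c Z. Z \<in> M \<Longrightarrow> \<pi> (c *\<^sub>R Z) = c * \<pi> Z"
    and U_in_M: "U \<in> M" and \<pi>_U: "\<pi> U = 1"
    and \<phi>_linear: "\<And>i. i \<in> {1..m} \<Longrightarrow> linear (\<phi> i)"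
    and \<phi>_U_nonneg: "\<And>i. i \<in> {1..m} \<Longrightarrow> 0 \<le> \<phi> i U"
    and A_eq: "A = (\<Inter>i\<in>{1..m}. {X. \<alpha> i \<le> \<phi> i X})"
    and A_closed: "closed A"
    and rho_set_nonempty: "\<And>X. {\<pi> Z | Z. Z \<in> M \<and> X + Z \<in> A} \<noteq> {}"
    and rho_set_bdd_below: "\<And>X. bdd_below {\<pi> Z | Z. Z \<in> M \<and> X + Z \<in> A}"
    and rho_continuous: "continuous_on UNIV (rho A M \<pi>)"
    and line_continuous: "\<And>X. continuous_on UNIV (\<lambda>t::real. X + t *\<^sub>R U)"
begin

abbreviation "\<rho> \<equiv> rho A M \<pi>"

definition A_ker :: "'a set" where
  "A_ker = {Y + Z | Y Z. Y \<in> A \<and> Z \<in> kerM M \<pi>}"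

lemma mem_A_iff: "X \<in> A \<longleftrightarrow> (\<forall>i\<in>{1..m}. \<alpha> i \<le> \<phi> i X)"
  using A_eq by blast

lemma \<pi>_zero: "\<pi> 0 = 0"
  using \<pi>_scale[of 0 0] subspace_0[OF M_subspace] by simp

lemma \<pi>_diff: "Y \<in> M \<Longrightarrow> Z \<in> M \<Longrightarrow> \<pi> (Y - Z) = \<pi> Y - \<pi> Z"
  using \<pi>_add[of Y "(-1) *\<^sub>R Z"] \<pi>_scale[of Z "-1"] M_subspace by (simp add: subspace_neg)

lemma zero_in_kerM: "0 \<in> kerM M \<pi>"
  using \<pi>_zero M_subspace by (simp add: kerM_def subspace_0)

lemma rho_le: "Z \<in> M \<Longrightarrow> X + Z \<in> A \<Longrightarrow> \<rho> X \<le> \<pi> Z"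
  unfolding rho_def by (rule cInf_lower[OF _ rho_set_bdd_below]) auto

lemma rho_lessE:
  assumes "\<rho> X < c"
  obtains Z where "Z \<in> M" "X + Z \<in> A" "\<pi> Z < c"
  using cInf_lessD[OF rho_set_nonempty, of X c] assms unfolding rho_def by blast

lemma rho_translate_le:
  assumes W: "W \<in> M"
  shows "\<rho> (X + W) \<le> \<rho> X - \<pi> W"
proof (rule ccontr)
  assume "\<not> ?thesis"
  then obtain Z where Z: "Z \<in> M" "X + Z \<in> A" "\<pi> Z < \<rho> (X + W) + \<pi> W"
    using rho_lessE[of X "\<rho> (X + W) + \<pi> W"] by force
  have "\<rho> (X + W) \<le> \<pi> (Z - W)"
    using Z W M_subspace by (intro rho_le) (simp_all add: subspace_diff)
  then show False using Z(3) \<pi>_diff[OF Z(1) W] by linarith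
qed

lemma rho_translate: "W \<in> M \<Longrightarrow> \<rho> (X + W) = \<rho> X - \<pi> W"
  using rho_translate_le[of W X] rho_translate_le[of "- W" "X + W"] M_subspace
    \<pi>_diff[of 0 W] \<pi>_zero by (simp add: subspace_neg subspace_0)

lemma A_plus_U: "X \<in> A \<Longrightarrow> 0 \<le> t \<Longrightarrow> X + t *\<^sub>R U \<in> A"
  using \<phi>_linear \<phi>_U_nonneg by (auto simp: mem_A_iff linear_add linear_scale add_increasing2)

lemma supp_fun_le: "i \<in> {1..m} \<Longrightarrow> Y \<in> A \<Longrightarrow> supp_fun A (\<phi> i) \<le> \<phi> i Y"
  unfolding supp_fun_def by (rule cInf_lower) (auto simp: mem_A_iff intro: bdd_belowI[of _ "\<alpha> i"])

lemma alpha_le_supp_fun: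
  assumes "i \<in> {1..m}"
  shows "\<alpha> i \<le> supp_fun A (\<phi> i)"
proof -
  have "A \<noteq> {}" using rho_set_nonempty[of 0] by auto
  then show ?thesis
    unfolding supp_fun_def using assms by (intro cInf_greatest) (auto simp: mem_A_iff)
qed

lemma A_subset_A_ker: "A \<subseteq> A_ker"
  unfolding A_ker_def using zero_in_kerM by force

lemma rho_neg_imp_A_ker:
  assumes "\<rho> Y < 0"
  shows "Y \<in> A_ker"
proof -
  obtain Z where Z: "Z \<in> M" "Y + Z \<in> A" "\<pi> Z < 0" using rho_lessE[OF assms] .
  define Z' where "Z' = Z - \<pi> Z *\<^sub>R U"
  have Z'M: "Z' \<in> M" using Z(1) U_in_M M_subspace by (simp add: Z'_def subspace_diff subspace_scale)
  have "\<pi> Z' = 0"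
    using \<pi>_diff[OF Z(1), of "\<pi> Z *\<^sub>R U"] \<pi>_scale[OF U_in_M] \<pi>_U U_in_M M_subspace
    by (simp add: Z'_def subspace_scale)
  then have "- Z' \<in> kerM M \<pi>" using Z'M \<pi>_diff[OF _ Z'M, of 0] \<pi>_zero M_subspace
    by (simp add: kerM_def subspace_neg subspace_0)
  moreover have "Y + Z' \<in> A" using A_plus_U[OF Z(2), of "- \<pi> Z"] Z(3) by (simp add: Z'_def add_diff_eq)
  moreover have "Y = (Y + Z') + (- Z')" by simp
  ultimately show ?thesis unfolding A_ker_def by blast
qed

lemma interior_A_ker_iff: "X \<in> interior A_ker \<longleftrightarrow> \<rho> X < 0"
proof
  assume "X \<in> interior A_ker"
  have "open ((\<lambda>t::real. X + t *\<^sub>R U) -` interior A_ker)"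
    using line_continuous[of X] by (intro open_vimage) simp_all
  moreover have "0 \<in> (\<lambda>t::real. X + t *\<^sub>R U) -` interior A_ker" using \<open>X \<in> interior A_ker\<close> by simp
  ultimately obtain e :: real where "0 < e" "ball 0 e \<subseteq> (\<lambda>t. X + t *\<^sub>R U) -` interior A_ker"
    by (rule openE)
  moreover have "- e / 2 \<in> ball 0 e" using \<open>0 < e\<close> by simp
  ultimately have "X + (- e / 2) *\<^sub>R U \<in> A_ker" using interior_subset by blast
  then obtain Y Z where YZ: "X + (- e / 2) *\<^sub>R U = Y + Z" "Y \<in> A" "Z \<in> M" "\<pi> Z = 0"
    by (auto simp: A_ker_def kerM_def)
  have eU: "(- e / 2) *\<^sub>R U \<in> M" using subspace_scale[OF M_subspace U_in_M] .
  have "X + ((- e / 2) *\<^sub>R U - Z) = Y" using YZ(1) by (simp add: add_diff_eq eq_diff_eq)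
  then have "\<rho> X \<le> \<pi> ((- e / 2) *\<^sub>R U - Z)"
    using YZ eU M_subspace by (intro rho_le) (simp_all add: subspace_diff)
  also have "\<dots> = - e / 2"
    using \<pi>_diff[OF eU YZ(3)] \<pi>_scale[OF U_in_M, of "- e / 2"] \<pi>_U YZ(4) by simp
  finally show "\<rho> X < 0" using \<open>0 < e\<close> by linarith
next
  assume "\<rho> X < 0"
  have "open (\<rho> -` {..<0})" using rho_continuous by (simp add: open_vimage)
  moreover have "\<rho> -` {..<0} \<subseteq> A_ker" using rho_neg_imp_A_ker by blast
  ultimately show "X \<in> interior A_ker" using \<open>\<rho> X < 0\<close> interior_maximal by blast
qed

lemma frontier_A_A_ker_iff: "X \<in> frontier A \<inter> frontier A_ker \<longleftrightarrow> X \<in> A \<and> \<rho> X = 0"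
proof
  assume X: "X \<in> frontier A \<inter> frontier A_ker"
  then have "X \<in> A" using A_closed by (simp add: frontier_def closure_closed)
  moreover have "\<rho> X \<le> 0" using rho_le[of 0 X] \<open>X \<in> A\<close> \<pi>_zero M_subspace by (simp add: subspace_0)
  moreover have "\<not> \<rho> X < 0" using X interior_A_ker_iff by (simp add: frontier_def)
  ultimately show "X \<in> A \<and> \<rho> X = 0" by simp
next
  assume X: "X \<in> A \<and> \<rho> X = 0"
  then have "X \<notin> interior A_ker" "X \<in> A_ker" using interior_A_ker_iff A_subset_A_ker by auto
  moreover have "X \<notin> interior A" using \<open>X \<notin> interior A_ker\<close> interior_mono[OF A_subset_A_ker] by blast
  ultimately show "X \<in> frontier A \<inter> frontier A_ker"
    using X closure_subset by (auto simp: frontier_def)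
qed

lemma feasible_eq_polyhedron_on:
  "{Z \<in> M. X + Z \<in> A} = polyhedron_on M {1..m} \<phi> (\<lambda>i. \<alpha> i - \<phi> i X)"
  using \<phi>_linear by (auto simp: polyhedron_on_def mem_A_iff linear_add diff_le_eq add.commute)

lemma optR_nonempty: "optR A M \<pi> X \<noteq> {}"
proof -
  let ?F = "{Z \<in> M. X + Z \<in> A}"
  have rho_set: "{\<pi> Z | Z. Z \<in> M \<and> X + Z \<in> A} = \<pi> ` ?F" by blast
  obtain B where "finite B" "span B = M" using M_finite_span by blast
  then have "lp_solvable M {1..m} \<phi> \<pi>"
    using lp_solvable_span[of B "{1..m}" \<phi> \<pi>] \<phi>_linear \<pi>_add \<pi>_scale by simp
  moreover have "?F \<noteq> {}" "bdd_below (\<pi> ` ?F)"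
    using rho_set_nonempty[of X] rho_set_bdd_below[of X] unfolding rho_set by auto
  ultimately obtain Z where Z: "Z \<in> ?F" and Z_min: "\<And>V. V \<in> ?F \<Longrightarrow> \<pi> Z \<le> \<pi> V"
    unfolding feasible_eq_polyhedron_on by (rule lp_solvableE) blast
  have "\<rho> X = \<pi> Z"
    unfolding rho_def rho_set using Z Z_min by (intro cInf_eq_minimum) auto
  then show ?thesis using Z by (auto simp: optR_def)
qed

lemma optR_unique:
  assumes kernel: "\<And>Y. Y \<in> A \<Longrightarrow> \<rho> Y = 0 \<Longrightarrow>
      kerM M \<pi> \<inter> (\<Inter>i\<in>active_set A m \<phi> Y. {V. \<phi> i V = 0}) = {0}"
    and Z1: "Z1 \<in> optR A M \<pi> X" and Z2: "Z2 \<in> optR A M \<pi> X"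
  shows "Z1 = Z2"
proof -
  have Z: "Z1 \<in> M" "X + Z1 \<in> A" "\<pi> Z1 = \<rho> X" "Z2 \<in> M" "X + Z2 \<in> A" "\<pi> Z2 = \<rho> X"
    using Z1 Z2 by (auto simp: optR_def)
  define Zm where "Zm = (1/2) *\<^sub>R (Z1 + Z2)"
  define Y where "Y = X + Zm"
  have ZmM: "Zm \<in> M" using Z M_subspace by (simp add: Zm_def subspace_add subspace_scale)
  have "\<pi> Zm = \<rho> X" using \<pi>_scale \<pi>_add Z M_subspace by (simp add: Zm_def subspace_add)
  then have "\<rho> Y = 0" using rho_translate[OF ZmM] by (simp add: Y_def)
  have \<phi>_Y: "2 * \<phi> i Y = \<phi> i (X + Z1) + \<phi> i (X + Z2)" if "i \<in> {1..m}" for i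
    using \<phi>_linear[OF that] by (simp add: Y_def Zm_def linear_add linear_scale field_simps)
  have "Y \<in> A" unfolding mem_A_iff
  proof
    fix i assume i: "i \<in> {1..m}"
    then have "\<alpha> i \<le> \<phi> i (X + Z1)" "\<alpha> i \<le> \<phi> i (X + Z2)" using Z(2,5) mem_A_iff by blast+
    then show "\<alpha> i \<le> \<phi> i Y" using \<phi>_Y[OF i] by linarith
  qed
  have "\<phi> i (Z1 - Z2) = 0" if "i \<in> active_set A m \<phi> Y" for i
  proof -
    have i: "i \<in> {1..m}" "\<phi> i Y = supp_fun A (\<phi> i)" using that by (auto simp: active_set_def)
    then have "\<phi> i (X + Z1) = \<phi> i (X + Z2)"
      using supp_fun_le[OF i(1) Z(2)] supp_fun_le[OF i(1) Z(5)] \<phi>_Y[OF i(1)] by linarith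
    then show ?thesis using \<phi>_linear[OF i(1)] by (simp add: linear_add linear_diff)
  qed
  moreover have "Z1 - Z2 \<in> kerM M \<pi>"
    using Z \<pi>_diff M_subspace by (simp add: kerM_def subspace_diff)
  ultimately have "Z1 - Z2 \<in> {0}" using kernel[OF \<open>Y \<in> A\<close> \<open>\<rho> Y = 0\<close>] by blast
  then show ?thesis by simp
qed

lemma card_optR_eq_1_imp_kernel_trivial:
  assumes card: "card (optR A M \<pi> X) = 1" and X: "X \<in> A" "\<rho> X = 0"
  shows "kerM M \<pi> \<inter> (\<Inter>i\<in>active_set A m \<phi> X. {V. \<phi> i V = 0}) = {0}"
proof -
  have "W = 0" if W: "W \<in> kerM M \<pi>" "\<And>i. i \<in> active_set A m \<phi> X \<Longrightarrow> \<phi> i W = 0" for W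
  proof -
    have "\<phi> i W = 0" if "i \<in> {1..m}" "\<alpha> i = \<phi> i X" for i
      using that W(2) alpha_le_supp_fun supp_fun_le[OF _ X(1)]
      by (force simp: active_set_def intro: antisym)
    then obtain \<delta> where "0 < \<delta>" "\<And>i. i \<in> {1..m} \<Longrightarrow> \<alpha> i \<le> \<phi> i X + \<delta> * \<phi> i W"
      using small_step_keeps_inequalities[of "{1..m}" \<alpha> "\<lambda>i. \<phi> i X" "\<lambda>i. \<phi> i W"] X(1)
      by (auto simp: mem_A_iff)
    then have "X + \<delta> *\<^sub>R W \<in> A" using \<phi>_linear by (simp add: mem_A_iff linear_add linear_scale)
    then have "\<delta> *\<^sub>R W \<in> optR A M \<pi> X" "0 \<in> optR A M \<pi> X"
      using W(1) X \<pi>_zero \<pi>_scale M_subspace by (auto simp: optR_def kerM_def subspace_scale subspace_0)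
    then show "W = 0" using card \<open>0 < \<delta>\<close> by (auto simp: card_1_singleton_iff)
  qed
  then show ?thesis using zero_in_kerM \<phi>_linear by (auto simp: active_set_def linear_0)
qed

theorem card_optR_eq_1_iff:
  "(\<forall>X. card (optR A M \<pi> X) = 1) \<longleftrightarrow>
   (\<forall>X \<in> frontier A \<inter> frontier A_ker.
      kerM M \<pi> \<inter> (\<Inter>i\<in>active_set A m \<phi> X. {V. \<phi> i V = 0}) = {0})"
proof
  assume "\<forall>X. card (optR A M \<pi> X) = 1"
  then show "\<forall>X \<in> frontier A \<inter> frontier A_ker.
      kerM M \<pi> \<inter> (\<Inter>i\<in>active_set A m \<phi> X. {V. \<phi> i V = 0}) = {0}"
    using card_optR_eq_1_imp_kernel_trivial frontier_A_A_ker_iff by blast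
next
  assume kernel: "\<forall>X \<in> frontier A \<inter> frontier A_ker.
      kerM M \<pi> \<inter> (\<Inter>i\<in>active_set A m \<phi> X. {V. \<phi> i V = 0}) = {0}"
  have kernel': "kerM M \<pi> \<inter> (\<Inter>i\<in>active_set A m \<phi> Y. {V. \<phi> i V = 0}) = {0}"
    if "Y \<in> A" "\<rho> Y = 0" for Y
    using kernel frontier_A_A_ker_iff that by blast
  show "\<forall>X. card (optR A M \<pi> X) = 1"
  proof
    fix X
    obtain Z where Z: "Z \<in> optR A M \<pi> X" using optR_nonempty by blast
    then have "optR A M \<pi> X = {Z}" using optR_unique[OF kernel' _ Z] by blast
    then show "card (optR A M \<pi> X) = 1" by simp
  qed
qed

end


theorem mainTheorem12:
  fixes ge :: "'a::{real_vector, t2_space, first_countable_topology} \<Rightarrow> 'a \<Rightarrow> bool"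
    and M A :: "'a set"
    and \<pi> :: "'a \<Rightarrow> real"
    and m :: nat
    and \<phi> :: "nat \<Rightarrow> 'a \<Rightarrow> real"
  assumes tvs: "lctvs TYPE('a)"
    and order: "partial_order_on UNIV {(x, y). ge y x}"
    and M_sub: "subspace M"
    and M_dim: "1 < dim M"
    and \<pi>_add: "\<And>Y Z. Y \<in> M \<Longrightarrow> Z \<in> M \<Longrightarrow> \<pi> (Y + Z) = \<pi> Y + \<pi> Z"
    and \<pi>_scale: "\<And>c Z. Z \<in> M \<Longrightarrow> \<pi> (c *\<^sub>R Z) = c * \<pi> Z"
    and A1: "\<exists>U \<in> M \<inter> pos_cone ge. \<pi> U = 1"
    and A2: "closed A" "0 \<in> A" "A \<noteq> UNIV"
            "\<And>X P. X \<in> A \<Longrightarrow> P \<in> pos_cone ge \<Longrightarrow> X + P \<in> A"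
    and A3: "\<And>X. {\<pi> Z | Z. Z \<in> M \<and> X + Z \<in> A} \<noteq> {}"
            "\<And>X. bdd_below {\<pi> Z | Z. Z \<in> M \<and> X + Z \<in> A}"
            "continuous_on UNIV (rho A M \<pi>)"
    and \<phi>_pos: "\<And>i. i \<in> {1..m} \<Longrightarrow> \<phi> i \<in> pos_dual ge"
    and poly: "\<exists>\<alpha> :: nat \<Rightarrow> real. A = (\<Inter>i\<in>{1..m}. {X. \<phi> i X \<ge> \<alpha> i})"
  shows "(\<forall>X. card (optR A M \<pi> X) = 1) \<longleftrightarrow>
         (\<forall>X \<in> frontier A \<inter> frontier {Y + Z | Y Z. Y \<in> A \<and> Z \<in> kerM M \<pi>}.
            kerM M \<pi> \<inter> (\<Inter>i\<in>active_set A m \<phi> X. {Y. \<phi> i Y = 0}) = {0})"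
proof -
  obtain \<alpha> :: "nat \<Rightarrow> real" where \<alpha>: "A = (\<Inter>i\<in>{1..m}. {X. \<alpha> i \<le> \<phi> i X})"
    using poly by blast
  obtain U where U: "U \<in> M" "U \<in> pos_cone ge" "\<pi> U = 1" using A1 by blast
  obtain B where B: "B \<subseteq> M" "M \<subseteq> span B" "card B = dim M" by (meson basis_exists)
  have "finite B" using B(3) M_dim card.infinite by fastforce
  moreover have "span B = M" using B span_minimal[OF B(1) M_sub] by blast
  ultimately have M_finite_span: "\<exists>B. finite B \<and> span B = M" by blast
  have \<phi>_linear: "linear (\<phi> i)" and \<phi>_U: "0 \<le> \<phi> i U" if "i \<in> {1..m}" for i
    using \<phi>_pos[OF that] U(2) by (auto simp: pos_dual_def tdual_def)
  \<comment> \<open>The order enters only through \<open>\<phi>\<^sub>i U \<ge> 0\<close>.\<close>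
  interpret polyhedral_acceptance M A \<pi> m \<phi> \<alpha> U
    by (rule polyhedral_acceptance.intro)
      (fact M_sub M_finite_span \<pi>_add \<pi>_scale U(1,3) \<phi>_linear \<phi>_U \<alpha> A2(1) A3
        lctvs_continuous_on_line[OF tvs])+
  show ?thesis using card_optR_eq_1_iff unfolding A_ker_def .
qed

end
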